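(* Let $1\le N\le M$ and $0\le n\le N$, let $\{u\}_n=\{u_1,\dots,u_n\}$, $\{v\}_N=\{v_1,\dots,v_N\}$, $\{w\}_M=\{w_1,\dots,w_M\}$ be complex variables, where $\{v\}_N$ satisfy the Bethe equations $$\prod_{j=1}^{M}\frac{[v_i-w_j+\gamma]}{[v_i-w_j]}=\prod_{j\ne i,\,1\le j\le N}\frac{[v_i-v_j+\gamma]}{[v_i-v_j-\gamma]},\qquad 1\le i\le N,$$ and $u_1,\dots,u_n$ are free. Put $\widetilde N=N-n$ and $$S_n=S_n(\{u\}_n,\{v\}_N,\{w\}_M)=\langle\Downarrow_{\widetilde N/M}|\prod_{i=1}^{n}C(u_i,\{w\}_M)\prod_{j=1}^{N}B(v_j,\{w\}_M)|\Uparrow_M\rangle$$ (for $n=0$ there are no $C$-operators and $S_0=S_0(\{v\}_N,\{w\}_M)$; for $n=N$ the bra is $\langle\Uparrow_M|$). Then for all $1\le n\le N$: (1) $S_n$ is symmetric in the variables $w_{\widetilde N+1},\dots,w_M$; (2) $S_n$ is a trigonometric polynomial of degree $M-1$ in $u_n$, vanishing at the points $u_n=w_i-\gamma$ for all $1\le i\le\widetilde N$; (3) $\displaystyle S_n\Big|_{u_n=w_{\widetilde N+1}}=\prod_{i=1}^{M}[w_{\widetilde N+1}-w_i+\gamma]\;S_{n-1}(\{u\}_{n-1},\{v\}_N,\{w\}_M)$. In addition, (4) $\displaystyle S_0(\{v\}_N,\{w\}_M)=\prod_{i=1}^{N}\prod_{j=N+1}^{M}[v_i-w_j]\;Z_N(\{v\}_N,\{w\}_N)$,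 where $\{w\}_N=\{w_1,\dots,w_N\}$ and $Z_N(\{v\}_N,\{w\}_N)=\langle\Downarrow_N|\prod_{i=1}^{N}B(v_i,\{w\}_N)|\Uparrow_N\rangle$ is computed on the chain with the $N$ sites $V_1,\dots,V_N$.
   Context: Notation: $[x]=\sinh x$, $\gamma$ a fixed complex parameter. Each site space $V_m\cong\mathbb{C}^2$ has basis $\uparrow_m=(1,0)^T$, $\downarrow_m=(0,1)^T$, with dual basis $\uparrow_m^*=(1\ 0)$, $\downarrow_m^*=(0\ 1)$. States on $V_1\otimes\cdots\otimes V_M$: $|\Uparrow_M\rangle=\bigotimes_{m=1}^M\uparrow_m$, $\langle\Uparrow_M|=\bigotimes_{m=1}^M\uparrow^*_m$, $\langle\Downarrow_M|=\bigotimes_{m=1}^M\downarrow^*_m$, and for $0\le K\le M$, $\langle\Downarrow_{K/M}|=\bigotimes_{m\le K}\downarrow^*_m\otimes\bigotimes_{K<m\le M}\uparrow^*_m$. The $R$-matrix $R_{ab}(u,v)\in\mathrm{End}(V_a\otimes V_b)$ ($V_a,V_b\cong\mathbb{C}^2$) is, in the ordered basis $(\uparrow\uparrow,\uparrow\downarrow,\downarrow\uparrow,\downarrow\downarrow)$ (first factor $V_a$), $$\begin{pmatrix}[u-v+\gamma]&0&0&0\\0&[u-v]&[\gamma]&0\\0&[\gamma]&[u-v]&0\\0&0&0&[u-v+\gamma]\end{pmatrix}.$$ The monodromy matrix with auxiliary space $V_a$ is $T_a(u,\{w\}_M)=R_{a1}(u,w_1)\cdots R_{aM}(u,w_M)$,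 written as $\begin{pmatrix}A(u,\{w\}_M)&B(u,\{w\}_M)\\C(u,\{w\}_M)&D(u,\{w\}_M)\end{pmatrix}_a$ in $V_a$ (rows/columns indexed by $\uparrow,\downarrow$), with entries operators on $V_1\otimes\cdots\otimes V_M$. The $C$-operators commute among themselves, as do the $B$-operators, so the products are unambiguous. A function $f$ is a trigonometric polynomial of degree $d$ in $x$ if $f=\sum_{k=0}^{d}c_k e^{(2k-d)x}$ with coefficients $c_k$ independent of $x$ (equivalently, a linear combination of products of $d$ functions $\sinh(x-a_i)$). *)

theory Defs
  imports Complex_Main "HOL-Combinatorics.Permutations"
begin

text \<open>Basis convention: a spin is a bool, False = up, True = down.
  A basis vector of V_1 (x) ... (x) V_M is a bool list of length M.\<close>

definition sh :: "complex \<Rightarrow> complex" where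
  "sh x = sinh x"

text \<open>Entry of the R-matrix R_ab(x) (x = u - v): row (a,s), column (a',s'),
  first factor the auxiliary space V_a.\<close>
definition Rent :: "complex \<Rightarrow> complex \<Rightarrow> bool \<Rightarrow> bool \<Rightarrow> bool \<Rightarrow> bool \<Rightarrow> complex" where
  "Rent g x a s a' s' =
     (if a = s \<and> a' = s' \<and> a = a' then sh (x + g)
      else if a \<noteq> s \<and> a' = a \<and> s' = s then sh x
      else if a \<noteq> s \<and> a' = s \<and> s' = a then sh g
      else 0)"

text \<open>Matrix element <xs| T_{a b}(u,{w}) |ys> of the monodromy matrix
  T_a = R_a1(u,w_1) ... R_aM(u,w_M).\<close>
fun mono :: "complex \<Rightarrow> complex \<Rightarrow> complex list \<Rightarrow> bool \<Rightarrow> bool \<Rightarrow> bool list \<Rightarrow> bool list \<Rightarrow> complex" where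
  "mono g u [] a b xs ys = (if a = b \<and> xs = [] \<and> ys = [] then 1 else 0)"
| "mono g u (w # ws) a b xs ys =
     (case (xs, ys) of
        (x # xs', y # ys') \<Rightarrow> (\<Sum>c\<in>(UNIV::bool set). Rent g (u - w) a x c y * mono g u ws c b xs' ys')
      | _ \<Rightarrow> 0)"

definition Bop :: "complex \<Rightarrow> complex \<Rightarrow> complex list \<Rightarrow> bool list \<Rightarrow> bool list \<Rightarrow> complex" where
  "Bop g u ws = mono g u ws False True"

definition Cop :: "complex \<Rightarrow> complex \<Rightarrow> complex list \<Rightarrow> bool list \<Rightarrow> bool list \<Rightarrow> complex" where
  "Cop g u ws = mono g u ws True False"

definition apply_op :: "nat \<Rightarrow> (bool list \<Rightarrow> bool list \<Rightarrow> complex) \<Rightarrow> (bool list \<Rightarrow> complex) \<Rightarrow> bool list \<Rightarrow> complex" where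
  "apply_op M A vec = (\<lambda>xs. \<Sum>ys\<in>{ys::bool list. length ys = M}. A xs ys * vec ys)"

definition up_state :: "nat \<Rightarrow> bool list \<Rightarrow> complex" where
  "up_state M = (\<lambda>xs. if xs = replicate M False then 1 else 0)"

text \<open>Configuration of the bra <Downarrow_{K/M}|: first K sites down, the rest up.\<close>
definition down_conf :: "nat \<Rightarrow> nat \<Rightarrow> bool list" where
  "down_conf K M = replicate K True @ replicate (M - K) False"

text \<open>S_n({u}_n,{v}_N,{w}_M) = <Downarrow_{(N-n)/M}| C(u_1)...C(u_n) B(v_1)...B(v_N) |Uparrow_M>,
  variables indexed from 1.\<close>
definition Sn :: "complex \<Rightarrow> nat \<Rightarrow> nat \<Rightarrow> nat \<Rightarrow> (nat \<Rightarrow> complex) \<Rightarrow> (nat \<Rightarrow> complex) \<Rightarrow> (nat \<Rightarrow> complex) \<Rightarrow> complex" where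
  "Sn g n N M u v w =
     (let ws = map w [1..<M+1] in
      foldr (apply_op M)
        (map (\<lambda>i. Cop g (u i) ws) [1..<n+1] @ map (\<lambda>j. Bop g (v j) ws) [1..<N+1])
        (up_state M) (down_conf (N - n) M))"

definition ZN :: "complex \<Rightarrow> nat \<Rightarrow> (nat \<Rightarrow> complex) \<Rightarrow> (nat \<Rightarrow> complex) \<Rightarrow> complex" where
  "ZN g N v w = Sn g 0 N N (\<lambda>_. 0) v w"

definition trig_poly :: "nat \<Rightarrow> (complex \<Rightarrow> complex) \<Rightarrow> bool" where
  "trig_poly d f \<longleftrightarrow> (\<exists>c::nat \<Rightarrow> complex. \<forall>x. f x = (\<Sum>k\<le>d. c k * exp (of_int (2 * int k - int d) * x)))"

end

theory Submission
  imports Defs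
begin

text \<open>The \<open>C\<close>-operators commute by the RTT relation, so \<open>C(u\<^sub>n)\<close> may be applied first, to
  the bra \<open>\<langle>\<Down>\<^bsub>K/M\<^esub>|\<close> with \<open>K = N - n\<close>. Along its first \<open>K\<close> sites the auxiliary spin stays
  down, contributing \<open>\<Prod>\<^bsub>i \<le> K\<^esub> [u\<^sub>n - w\<^sub>i + \<gamma>]\<close>: these are the zeros. At \<open>u\<^sub>n = w\<^bsub>K+1\<^esub>\<close> the
  R-matrix of site \<open>K + 1\<close> can only flip that site, turning the bra into \<open>\<langle>\<Down>\<^bsub>(K+1)/M\<^esub>|\<close>,
  the bra of \<open>S\<^bsub>n-1\<^esub>\<close>. The degree bound holds for every off-diagonal monodromy entry on \<open>M\<close>
  sites. Symmetry comes from the R-matrix on two adjacent sites beyond \<open>K\<close>: it intertwines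
  the monodromy matrices with the two inhomogeneities exchanged and acts on the bra and on
  \<open>|\<Up>\<^sub>M\<rangle>\<close> by the same scalar. In \<open>S\<^sub>0\<close> every \<open>B(v\<^sub>i)\<close> acts diagonally on the up sites
  \<open>N + 1, \<dots>, M\<close> of the bra. Scalar factors \<open>[\<dots>]\<close> are cancelled by continuity, since the
  zeros of \<open>sinh\<close> are isolated.\<close>

lemma sh_exp: "sh z = (exp z - inverse (exp z)) / 2"
  by (simp add: sh_def sinh_def exp_minus scaleR_conv_of_real)

lemma Re_eq_0_if_sh_eq_0:
  assumes "sh z = 0"
  shows "Re z = 0"
proof -
  have "exp z \<in> {1, -1}" using assms by (simp add: sh_def sinh_zero_iff)
  then have "exp (Re z) = 1" by (metis norm_exp_eq_Re norm_one norm_minus_cancel insertE empty_iff)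
  then show ?thesis by simp
qed

text \<open>The zeros of \<open>sh (t + a)\<close> lie on a vertical line, so every point is a limit of
  non-zeros approaching horizontally; hence a factor \<open>sh (t + a)\<close> may be cancelled
  from an identity between continuous functions.\<close>
lemma sh_mult_cancel_continuous:
  assumes f: "continuous_on UNIV f" and zero: "\<And>t. sh (t + a) * f t = 0"
  shows "f t0 = 0"
proof -
  define \<sigma> :: real where "\<sigma> = (if Re (t0 + a) \<ge> 0 then 1 else -1)"
  define s where "s n = t0 + of_real (\<sigma> / (real n + 1))" for n
  have Re_nonzero: "Re (s n + a) \<noteq> 0" for n
  proof -
    have "Re (s n + a) = Re (t0 + a) + \<sigma> / (real n + 1)" by (simp add: s_def)
    moreover have "\<sigma> / (real n + 1) > 0" if "Re (t0 + a) \<ge> 0" using that by (simp add: \<sigma>_def)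
    moreover have "\<sigma> / (real n + 1) < 0" if "\<not> Re (t0 + a) \<ge> 0" using that by (simp add: \<sigma>_def)
    ultimately show ?thesis by linarith
  qed
  then have "sh (s n + a) \<noteq> 0" for n using Re_nonzero[of n] Re_eq_0_if_sh_eq_0[of "s n + a"] by blast
  then have f_s: "f (s n) = 0" for n using zero[of "s n"] by simp
  have "(\<lambda>n. \<sigma> * inverse (real (Suc n))) \<longlonglongrightarrow> \<sigma> * 0"
    by (intro tendsto_mult tendsto_const LIMSEQ_inverse_real_of_nat)
  then have "(\<lambda>n. of_real (\<sigma> / (real n + 1))) \<longlonglongrightarrow> (of_real 0 :: complex)"
    by (intro tendsto_of_real) (simp add: divide_inverse add.commute)
  then have "s \<longlonglongrightarrow> t0"
    unfolding s_def using tendsto_add[OF tendsto_const, of _ 0 sequentially t0] by simp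
  moreover have "isCont f t0"
    using f continuous_on_eq_continuous_at[OF open_UNIV] by blast
  ultimately have "(\<lambda>n. f (s n)) \<longlonglongrightarrow> f t0"
    by (rule isCont_tendsto_compose[rotated])
  then have "(\<lambda>n. 0) \<longlonglongrightarrow> f t0"
    by (simp only: f_s)
  then show ?thesis
    by (rule LIMSEQ_const_iff[THEN iffD1, symmetric])
qed

abbreviation configs :: "nat \<Rightarrow> bool list set" where
  "configs n \<equiv> {ys. length ys = n}"

lemma finite_configs: "finite (configs n)"
  using finite_lists_length_eq[of "UNIV :: bool set" n] by simp

lemma sum_configs_Suc: "(\<Sum>ys\<in>configs (Suc n). f ys) = (\<Sum>y\<in>UNIV. \<Sum>ys\<in>configs n. f (y # ys))"
proof -
  have configs_Suc: "configs (Suc n) = (\<lambda>(y, ys). y # ys) ` (UNIV \<times> configs n)"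
    by (auto simp: length_Suc_conv image_iff)
  have "inj_on (\<lambda>(y, ys). y # ys) (UNIV \<times> configs n)"
    by (auto simp: inj_on_def)
  then have "(\<Sum>ys\<in>configs (Suc n). f ys) = (\<Sum>(y, ys)\<in>UNIV \<times> configs n. f (y # ys))"
    unfolding configs_Suc by (subst sum.reindex) (auto simp: case_prod_beta)
  then show ?thesis
    by (simp add: sum.cartesian_product)
qed

lemma sum_configs_add:
  "(\<Sum>ys\<in>configs (n + k). f ys) = (\<Sum>ys1\<in>configs n. \<Sum>ys2\<in>configs k. f (ys1 @ ys2))"
  by (induction n arbitrary: f) (simp_all add: sum_configs_Suc)

definition op_mult :: "nat \<Rightarrow> (bool list \<Rightarrow> bool list \<Rightarrow> complex) \<Rightarrow> (bool list \<Rightarrow> bool list \<Rightarrow> complex)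
    \<Rightarrow> bool list \<Rightarrow> bool list \<Rightarrow> complex" where
  "op_mult n A B xs zs = (\<Sum>ys\<in>configs n. A xs ys * B ys zs)"

lemma apply_op_apply_op: "apply_op n A (apply_op n B V) = apply_op n (op_mult n A B) V"
  unfolding apply_op_def op_mult_def
  by (auto simp: fun_eq_iff sum_distrib_left sum_distrib_right mult.assoc intro: sum.swap)

lemma apply_op_delta:
  assumes "\<And>ys. A xs ys = (if ys = d then c else 0)" and "length d = n"
  shows "apply_op n A V xs = c * V d"
  using assms finite_configs by (simp add: apply_op_def if_distrib[of "\<lambda>x. x * _"] cong: if_cong)

lemma foldr_apply_op_move:
  assumes "\<forall>X\<in>set Xs. op_mult n A X = op_mult n X A"
  shows "foldr (apply_op n) (Xs @ A # Ys) V = apply_op n A (foldr (apply_op n) (Xs @ Ys) V)"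
  using assms by (induction Xs) (auto simp: apply_op_apply_op)

lemma foldr_apply_op_intertwine:
  assumes "list_all2 (\<lambda>A A'. op_mult n R A' = op_mult n A R) As As'"
  shows "apply_op n R (foldr (apply_op n) As' V) = foldr (apply_op n) As (apply_op n R V)"
  using assms
proof (induction As As' rule: list_all2_induct)
  case (Cons A As A' As')
  have "apply_op n R (apply_op n A' F) = apply_op n A (apply_op n R F)" for F
    using Cons.hyps(1) by (simp add: apply_op_apply_op)
  with Cons.IH show ?case by simp
qed simp

lemma foldr_apply_op_scale:
  "foldr (apply_op n) As (\<lambda>xs. c * V xs) = (\<lambda>xs. c * foldr (apply_op n) As V xs)"
  by (induction As) (auto simp: apply_op_def sum_distrib_left algebra_simps)

section \<open>The monodromy matrix\<close>

lemma mono_Nil_left [simp]: "mono g u (w # ws) a b [] ys = 0"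
  by (cases ys) auto

lemma mono_Nil_right [simp]: "mono g u (w # ws) a b xs [] = 0"
  by (cases xs) auto

lemma mono_Cons_Cons [simp]:
  "mono g u (w # ws) a b (x # xs) (y # ys) = (\<Sum>c\<in>UNIV. Rent g (u - w) a x c y * mono g u ws c b xs ys)"
  by simp

declare mono.simps(2) [simp del]

lemma mono_eq_0_if_length_neq:
  "length xs \<noteq> length ws \<or> length ys \<noteq> length ws \<Longrightarrow> mono g u ws a b xs ys = 0"
proof (induction ws arbitrary: a xs ys)
  case (Cons w ws)
  then show ?case by (cases xs; cases ys) auto
qed auto

lemma mono_append:
  assumes "length xs1 = length ws1" "length ys1 = length ws1"
  shows "mono g u (ws1 @ ws2) a b (xs1 @ xs2) (ys1 @ ys2)
       = (\<Sum>c\<in>UNIV. mono g u ws1 a c xs1 ys1 * mono g u ws2 c b xs2 ys2)"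
  using assms
proof (induction ws1 arbitrary: a xs1 ys1)
  case Nil
  then show ?case by (simp add: UNIV_bool)
next
  case (Cons w ws1)
  then obtain x xs1' y ys1' where "xs1 = x # xs1'" "ys1 = y # ys1'"
    by (cases xs1; cases ys1) auto
  with Cons show ?case by (simp add: UNIV_bool algebra_simps)
qed

lemma mono_up_all_up:
  "mono g u ws False b (replicate (length ws) False) ys =
     (if \<not> b \<and> ys = replicate (length ws) False then (\<Prod>w\<leftarrow>ws. sh (u - w + g)) else 0)"
proof (induction ws arbitrary: ys)
  case (Cons w ws)
  then show ?case by (cases ys) (auto simp: UNIV_bool Rent_def)
qed auto

lemma mono_down_down_all_up:
  "mono g u ws True True (replicate (length ws) False) ys =
     (if ys = replicate (length ws) False then (\<Prod>w\<leftarrow>ws. sh (u - w)) else 0)"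
proof (induction ws arbitrary: ys)
  case (Cons w ws)
  then show ?case by (cases ys) (auto simp: UNIV_bool Rent_def mono_up_all_up)
qed auto

lemma mono_down_down_prefix:
  assumes "k \<le> length ws"
  shows "mono g u ws True b (replicate k True @ xs) ys =
    (if take k ys = replicate k True
     then (\<Prod>w\<leftarrow>take k ws. sh (u - w + g)) * mono g u (drop k ws) True b xs (drop k ys) else 0)"
  using assms
proof (induction k arbitrary: ws ys)
  case (Suc k)
  then obtain w ws' where "ws = w # ws'" by (cases ws) auto
  with Suc show ?case by (cases ys) (auto simp: UNIV_bool Rent_def)
qed simp

lemma continuous_on_Rent:
  "continuous_on UNIV X \<Longrightarrow> continuous_on UNIV (\<lambda>t. Rent g (X t) a s a' s')"
  unfolding Rent_def sh_def by (cases a; cases s; cases a'; cases s') (auto intro!: continuous_intros)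

lemma continuous_on_mono:
  assumes "continuous_on UNIV U" and "\<forall>F\<in>set Fs. continuous_on UNIV F"
  shows "continuous_on UNIV (\<lambda>t. mono g (U t) (map (\<lambda>F. F t) Fs) a b xs ys)"
  using assms(2)
proof (induction Fs arbitrary: a xs ys)
  case (Cons F Fs)
  have "continuous_on UNIV (\<lambda>t. U t - F t)"
    using assms(1) Cons.prems by (auto intro!: continuous_intros)
  with Cons show ?case
    by (cases xs; cases ys) (auto intro!: continuous_intros continuous_on_Rent)
qed simp

lemma continuous_on_op_mult:
  assumes "\<And>xs ys. continuous_on UNIV (\<lambda>t. A t xs ys)" and "\<And>xs ys. continuous_on UNIV (\<lambda>t. B t xs ys)"
  shows "continuous_on UNIV (\<lambda>t. op_mult n (A t) (B t) xs zs)"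
  unfolding op_mult_def by (intro continuous_intros assms)

lemma continuous_on_foldr_apply_op:
  assumes "\<And>X xs ys. X \<in> set Xs \<Longrightarrow> continuous_on UNIV (\<lambda>t. X t xs ys)"
  shows "continuous_on UNIV (\<lambda>t. foldr (apply_op n) (map (\<lambda>X. X t) Xs) V xs)"
  using assms
proof (induction Xs arbitrary: xs)
  case (Cons X Xs)
  then show ?case
    unfolding list.map foldr_Cons o_apply apply_op_def
    by (intro continuous_intros) auto
qed simp

section \<open>The RTT relation and commuting \<open>C\<close>-operators\<close>

text \<open>Matrix element of \<open>L\<^sub>a(u) L\<^sub>b(v)\<close> on a single site with inhomogeneity \<open>w\<close>:
  auxiliary indices \<open>a, b\<close> in and \<open>c, d\<close> out, quantum index \<open>x\<close> in and \<open>z\<close> out.\<close>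
definition L_pair :: "complex \<Rightarrow> complex \<Rightarrow> complex \<Rightarrow> complex \<Rightarrow> bool \<Rightarrow> bool \<Rightarrow> bool \<Rightarrow> bool
    \<Rightarrow> bool \<Rightarrow> bool \<Rightarrow> complex" where
  "L_pair g u v w a b x z c d = (\<Sum>y\<in>UNIV. Rent g (u - w) a x c y * Rent g (v - w) b y d z)"

lemma RLL_relation:
  "(\<Sum>c'\<in>UNIV. \<Sum>d'\<in>UNIV. Rent g (u - v) a b c' d' * L_pair g u v w c' d' x z c d)
   = (\<Sum>c'\<in>UNIV. \<Sum>d'\<in>UNIV. L_pair g v u w b a x z d' c' * Rent g (u - v) c' d' c d)"
  by (cases a; cases b; cases x; cases z; cases c; cases d)
    (simp_all add: L_pair_def Rent_def UNIV_bool sh_exp exp_diff exp_add field_simps)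

lemma op_mult_mono_Cons:
  "op_mult (Suc n) (mono g u (w # ws) c e) (mono g v (w # ws) d f) (x # xs) (z # zs)
   = (\<Sum>c'\<in>UNIV. \<Sum>d'\<in>UNIV. L_pair g u v w c d x z c' d' * op_mult n (mono g u ws c' e) (mono g v ws d' f) xs zs)"
  unfolding op_mult_def L_pair_def
  by (simp add: sum_configs_Suc UNIV_bool sum_distrib_left sum_distrib_right algebra_simps
      sum.distrib[symmetric])

lemma RTT_relation:
  assumes "length ws = n"
  shows "(\<Sum>c\<in>UNIV. \<Sum>d\<in>UNIV. Rent g (u - v) a b c d * op_mult n (mono g u ws c e) (mono g v ws d f) xs zs)
       = (\<Sum>c\<in>UNIV. \<Sum>d\<in>UNIV. op_mult n (mono g v ws b d) (mono g u ws a c) xs zs * Rent g (u - v) c d e f)"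
  using assms
proof (induction ws arbitrary: n a b xs zs)
  case Nil
  then show ?case by (simp add: op_mult_def UNIV_bool Rent_def)
next
  case (Cons w ws)
  then obtain n' where n: "n = Suc n'" "length ws = n'" by auto
  show ?case
  proof (cases xs; cases zs)
    fix x xs' z zs' assume xs: "xs = x # xs'" and zs: "zs = z # zs'"
    let ?m = "\<lambda>u v c d e f. op_mult n' (mono g u ws c e) (mono g v ws d f) xs' zs'"
    have "(\<Sum>c\<in>UNIV. \<Sum>d\<in>UNIV. Rent g (u - v) a b c d * op_mult n (mono g u (w # ws) c e) (mono g v (w # ws) d f) xs zs)
      = (\<Sum>c'\<in>UNIV. \<Sum>d'\<in>UNIV. (\<Sum>c\<in>UNIV. \<Sum>d\<in>UNIV. Rent g (u - v) a b c d * L_pair g u v w c d x z c' d') * ?m u v c' d' e f)"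
      by (simp add: n xs zs op_mult_mono_Cons UNIV_bool algebra_simps)
    also have "\<dots> = (\<Sum>c'\<in>UNIV. \<Sum>d'\<in>UNIV. (\<Sum>c\<in>UNIV. \<Sum>d\<in>UNIV. L_pair g v u w b a x z d c * Rent g (u - v) c d c' d') * ?m u v c' d' e f)"
      by (simp only: RLL_relation)
    also have "\<dots> = (\<Sum>c\<in>UNIV. \<Sum>d\<in>UNIV. L_pair g v u w b a x z d c * (\<Sum>c'\<in>UNIV. \<Sum>d'\<in>UNIV. Rent g (u - v) c d c' d' * ?m u v c' d' e f))"
      by (simp add: UNIV_bool algebra_simps)
    also have "\<dots> = (\<Sum>c\<in>UNIV. \<Sum>d\<in>UNIV. L_pair g v u w b a x z d c * (\<Sum>c'\<in>UNIV. \<Sum>d'\<in>UNIV. ?m v u d c d' c' * Rent g (u - v) c' d' e f))"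
      using Cons.IH[OF n(2)] by simp
    also have "\<dots> = (\<Sum>c\<in>UNIV. \<Sum>d\<in>UNIV. op_mult n (mono g v (w # ws) b d) (mono g u (w # ws) a c) xs zs * Rent g (u - v) c d e f)"
      by (simp add: n xs zs op_mult_mono_Cons UNIV_bool algebra_simps)
    finally show ?thesis .
  qed (auto simp: op_mult_def n)
qed

text \<open>The RTT relation only yields \<open>[u - v + \<gamma>] C(u) C(v) = [u - v + \<gamma>] C(v) C(u)\<close>;
  the factor is removed by continuity in \<open>u\<close>.\<close>
lemma Cop_commute:
  assumes "length ws = n"
  shows "op_mult n (Cop g u ws) (Cop g v ws) = op_mult n (Cop g v ws) (Cop g u ws)"
proof (intro ext)
  fix xs zs
  let ?f = "\<lambda>t. op_mult n (Cop g t ws) (Cop g v ws) xs zs - op_mult n (Cop g v ws) (Cop g t ws) xs zs"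
  have "continuous_on UNIV (\<lambda>t. mono g t ws a b xs ys)" for a b xs ys
    using continuous_on_mono[of "\<lambda>t. t" "map (\<lambda>w t. w) ws"] by (simp add: o_def continuous_on_id)
  then have "continuous_on UNIV ?f"
    unfolding Cop_def by (intro continuous_intros continuous_on_op_mult)
  moreover have "sh (t + (g - v)) * ?f t = 0" for t
    using RTT_relation[OF assms, of g t v True True False False xs zs]
    by (simp add: UNIV_bool Rent_def Cop_def algebra_simps)
  ultimately show "op_mult n (Cop g u ws) (Cop g v ws) xs zs = op_mult n (Cop g v ws) (Cop g u ws) xs zs"
    using sh_mult_cancel_continuous[of ?f "g - v" u] by simp
qed

section \<open>Trigonometric polynomials\<close>

lemma trig_poly_zero: "trig_poly d (\<lambda>x. 0)"
  unfolding trig_poly_def by (rule exI[of _ "\<lambda>_. 0"]) simp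

lemma trig_poly_add:
  assumes "trig_poly d f" and "trig_poly d h"
  shows "trig_poly d (\<lambda>x. f x + h x)"
proof -
  from assms obtain c1 c2 where "\<And>x. f x = (\<Sum>k\<le>d. c1 k * exp (of_int (2 * int k - int d) * x))"
    and "\<And>x. h x = (\<Sum>k\<le>d. c2 k * exp (of_int (2 * int k - int d) * x))"
    unfolding trig_poly_def by blast
  then show ?thesis unfolding trig_poly_def
    by (intro exI[of _ "\<lambda>k. c1 k + c2 k"]) (simp add: distrib_right sum.distrib)
qed

lemma trig_poly_cmult:
  assumes "trig_poly d f"
  shows "trig_poly d (\<lambda>x. a * f x)"
proof -
  from assms obtain c where "\<And>x. f x = (\<Sum>k\<le>d. c k * exp (of_int (2 * int k - int d) * x))"
    unfolding trig_poly_def by blast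
  then show ?thesis unfolding trig_poly_def
    by (intro exI[of _ "\<lambda>k. a * c k"]) (simp add: sum_distrib_left mult.assoc)
qed

lemma trig_poly_sum:
  assumes "\<And>i. i \<in> A \<Longrightarrow> trig_poly d (f i)"
  shows "trig_poly d (\<lambda>x. \<Sum>i\<in>A. f i x)"
  using assms
  by (induction A rule: infinite_finite_induct) (simp_all add: trig_poly_zero trig_poly_add)

lemma trig_poly_exp_mult:
  assumes "trig_poly d f"
  shows "trig_poly (Suc d) (\<lambda>x. exp x * f x)"
proof -
  from assms obtain c where c: "\<And>x. f x = (\<Sum>k\<le>d. c k * exp (of_int (2 * int k - int d) * x))"
    unfolding trig_poly_def by blast
  have shifted: "exp x * f x = (\<Sum>k\<le>Suc d. (if k = 0 then 0 else c (k - 1)) * exp (of_int (2 * int k - int (Suc d)) * x))"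
    for x :: complex
  proof -
    have "exp x * f x = (\<Sum>k\<le>d. c k * exp (of_int (2 * int (Suc k) - int (Suc d)) * x))"
      unfolding c sum_distrib_left by (rule sum.cong) (auto simp: exp_add[symmetric] algebra_simps)
    then show ?thesis by (subst sum.atMost_Suc_shift) simp
  qed
  show ?thesis unfolding trig_poly_def by (intro exI allI) (rule shifted)
qed

lemma trig_poly_exp_minus_mult:
  assumes "trig_poly d f"
  shows "trig_poly (Suc d) (\<lambda>x. exp (- x) * f x)"
proof -
  from assms obtain c where c: "\<And>x. f x = (\<Sum>k\<le>d. c k * exp (of_int (2 * int k - int d) * x))"
    unfolding trig_poly_def by blast
  have shifted: "exp (- x) * f x = (\<Sum>k\<le>Suc d. (if k \<le> d then c k else 0) * exp (of_int (2 * int k - int (Suc d)) * x))"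
    for x :: complex
  proof -
    have "exp (- x) * f x = (\<Sum>k\<le>d. c k * exp (of_int (2 * int k - int (Suc d)) * x))"
      unfolding c sum_distrib_left by (rule sum.cong) (auto simp: exp_add[symmetric] algebra_simps)
    then show ?thesis by (simp add: sum.atMost_Suc)
  qed
  show ?thesis unfolding trig_poly_def by (intro exI allI) (rule shifted)
qed

lemma trig_poly_Suc_Suc:
  assumes "trig_poly d f"
  shows "trig_poly (Suc (Suc d)) f"
proof -
  have "trig_poly (Suc (Suc d)) (\<lambda>x. exp (- x) * (exp x * f x))"
    using assms by (intro trig_poly_exp_mult trig_poly_exp_minus_mult)
  moreover have "exp (- x) * (exp x * f x) = f x" for x :: complex
    by (simp add: exp_minus)
  ultimately show ?thesis by simp
qed

lemma trig_poly_sh_mult: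
  assumes "trig_poly d f"
  shows "trig_poly (Suc d) (\<lambda>x. sh (x + a) * f x)"
proof -
  have "sh (x + a) * f x = exp a / 2 * (exp x * f x) + (- exp (- a) / 2) * (exp (- x) * f x)" for x
  proof -
    have "sh (x + a) = exp a / 2 * exp x + (- exp (- a) / 2) * exp (- x)"
      by (simp add: sh_exp exp_add exp_minus field_simps)
    then show ?thesis by (simp only: distrib_right mult.assoc)
  qed
  moreover have "trig_poly (Suc d) (\<lambda>x. exp a / 2 * (exp x * f x) + (- exp (- a) / 2) * (exp (- x) * f x))"
    using assms by (intro trig_poly_add trig_poly_cmult trig_poly_exp_mult trig_poly_exp_minus_mult)
  ultimately show ?thesis by simp
qed

lemma Rent_keep:
  "Rent g (x - w) a s a y = (if a = s \<and> a = y then sh (x + (g - w)) else if a \<noteq> s \<and> y = s then sh (x + - w) else 0)"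
  by (cases a; cases s; cases y) (auto simp: Rent_def algebra_simps)

lemma Rent_flip: "Rent g (x - w) a s (\<not> a) y = (if a \<noteq> s \<and> y = a then sh g else 0)"
  by (cases a; cases s; cases y) (auto simp: Rent_def)

lemma trig_poly_Rent_keep_mult:
  assumes "trig_poly d f"
  shows "trig_poly (Suc d) (\<lambda>x. Rent g (x - w) a s a y * f x)"
  using trig_poly_sh_mult[OF assms, of "g - w"] trig_poly_sh_mult[OF assms, of "- w"] trig_poly_zero
  by (cases "a = s \<and> a = y"; cases "a \<noteq> s \<and> y = s") (auto simp: Rent_keep)

lemma trig_poly_Rent_flip_mult:
  assumes "trig_poly d f"
  shows "trig_poly d (\<lambda>x. Rent g (x - w) a s (\<not> a) y * f x)"
  using trig_poly_cmult[OF assms] trig_poly_zero by (simp add: Rent_flip)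

lemma trig_poly_mono: "trig_poly (length ws - of_bool (a \<noteq> b)) (\<lambda>x. mono g x ws a b xs ys)"
proof (induction ws arbitrary: a xs ys)
  case Nil
  show ?case unfolding trig_poly_def
    by (auto intro!: exI[of _ "\<lambda>_. if a = b \<and> xs = [] \<and> ys = [] then 1 else 0"])
next
  case (Cons w ws)
  show ?case
  proof (cases xs; cases ys)
    fix x xs' y ys' assume xs: "xs = x # xs'" and ys: "ys = y # ys'"
    let ?L = "length ws"
    have split: "mono g t (w # ws) a b xs ys = Rent g (t - w) a x a y * mono g t ws a b xs' ys'
        + Rent g (t - w) a x (\<not> a) y * mono g t ws (\<not> a) b xs' ys'" for t
      by (cases a) (simp_all add: xs ys UNIV_bool add.commute)
    have off_diagonal: "trig_poly (?L - 1) (\<lambda>t. mono g t ws c b xs' ys')" if "c \<noteq> b" for c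
      using Cons.IH[of c xs' ys'] that by simp
    have off_diagonal_Nil: "mono g t ws c b xs' ys' = 0" if "c \<noteq> b" "ws = []" for c t
      using that by simp
    show ?thesis
    proof (cases "a = b")
      case True
      have "trig_poly (Suc ?L) (\<lambda>t. Rent g (t - w) a x a y * mono g t ws a b xs' ys')"
        using Cons.IH[of a xs' ys'] True by (simp add: trig_poly_Rent_keep_mult)
      moreover have "trig_poly (Suc ?L) (\<lambda>t. Rent g (t - w) a x (\<not> a) y * mono g t ws (\<not> a) b xs' ys')"
      proof (cases "ws = []")
        case False
        then obtain d where d: "?L = Suc d" by (cases ws) auto
        with off_diagonal[of "\<not> a"] True show ?thesis
          by (simp add: trig_poly_Rent_flip_mult trig_poly_Suc_Suc)
      qed (use off_diagonal_Nil True in \<open>simp add: trig_poly_zero\<close>)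
      ultimately show ?thesis unfolding split using True by (simp add: trig_poly_add)
    next
      case False
      have "trig_poly ?L (\<lambda>t. Rent g (t - w) a x a y * mono g t ws a b xs' ys')"
      proof (cases "ws = []")
        case False
        then obtain d where d: "?L = Suc d" by (cases ws) auto
        with off_diagonal[of a] \<open>a \<noteq> b\<close> show ?thesis
          by (simp add: trig_poly_Rent_keep_mult)
      qed (use off_diagonal_Nil False in \<open>simp add: trig_poly_zero\<close>)
      moreover have "trig_poly ?L (\<lambda>t. Rent g (t - w) a x (\<not> a) y * mono g t ws (\<not> a) b xs' ys')"
        using Cons.IH[of "\<not> a" xs' ys'] False by (intro trig_poly_Rent_flip_mult) simp
      ultimately show ?thesis unfolding split using False by (simp add: trig_poly_add)
    qed
  qed (simp_all add: trig_poly_zero)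
qed

section \<open>Moving \<open>C(u\<^sub>n)\<close> onto the bra\<close>

lemma down_conf_Suc: "K < M \<Longrightarrow> down_conf (Suc K) M = replicate K True @ True # replicate (M - Suc K) False"
  by (simp add: down_conf_def replicate_app_Cons_same)

lemma Cop_down_conf_eq_0:
  assumes "length ws = M" "K \<le> M" "i < K" "sh (x - ws ! i + g) = 0"
  shows "Cop g x ws (down_conf K M) ys = 0"
proof -
  have "ws ! i \<in> set (take K ws)"
    using assms by (metis length_take min.absorb2 nth_mem nth_take)
  then have "(\<Prod>w\<leftarrow>take K ws. sh (x - w + g)) = 0"
    using assms(4) by (simp add: prod_list_zero_iff)
  then show ?thesis
    using assms by (simp add: Cop_def down_conf_def mono_down_down_prefix)
qed

text \<open>At \<open>u = w\<close> the diagonal entry \<open>[u - w]\<close> of the first R-matrix vanishes, so only the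
  spin flip survives.\<close>
lemma Cop_up_all_up_at_first_site:
  "Cop g w (w # ws) (False # replicate (length ws) False) ys =
     (if ys = True # replicate (length ws) False then sh g * (\<Prod>w'\<leftarrow>ws. sh (w - w' + g)) else 0)"
  by (cases ys) (auto simp: Cop_def UNIV_bool Rent_def sh_def mono_up_all_up)

lemma Cop_down_conf_next:
  assumes "length ws = M" "K < M"
  shows "Cop g (ws ! K) ws (down_conf K M) ys =
     (if ys = down_conf (Suc K) M then (\<Prod>w\<leftarrow>ws. sh (ws ! K - w + g)) else 0)"
proof -
  let ?x = "ws ! K" and ?rest = "drop (Suc K) ws"
  have drop_ws: "drop K ws = ?x # ?rest"
    using assms by (simp add: Cons_nth_drop_Suc)
  have conf: "down_conf K M = replicate K True @ False # replicate (length ?rest) False"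
    using assms by (simp add: down_conf_def replicate_Suc[symmetric] Suc_diff_Suc)
  have "(\<Prod>w\<leftarrow>ws. sh (?x - w + g)) = (\<Prod>w\<leftarrow>take K ws @ ?x # ?rest. sh (?x - w + g))"
    using assms by (simp add: id_take_nth_drop[symmetric])
  then have prod: "(\<Prod>w\<leftarrow>ws. sh (?x - w + g))
      = (\<Prod>w\<leftarrow>take K ws. sh (?x - w + g)) * (sh g * (\<Prod>w\<leftarrow>?rest. sh (?x - w + g)))"
    by simp
  have conf_Suc: "(take K ys = replicate K True \<and> drop K ys = True # replicate (length ?rest) False)
      \<longleftrightarrow> ys = down_conf (Suc K) M"
    using assms down_conf_Suc[of K M] by (auto simp: append_eq_conv_conj) (metis append_take_drop_id)
  show ?thesis
    unfolding Cop_def conf prod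
    using assms conf_Suc Cop_up_all_up_at_first_site[of g ?x ?rest "drop K ys"]
    by (auto simp: mono_down_down_prefix drop_ws Cop_def)
qed

lemma prod_list_map_upt_Suc: "(\<Prod>i\<leftarrow>[a..<Suc b]. f i) = (\<Prod>i=a..b. f i)"
  using prod.distinct_set_conv_list[of "[a..<Suc b]" f]
  by (simp add: atLeastLessThanSuc_atLeastAtMost del: upt_Suc)

lemma nth_map_upt_Suc: "k < M \<Longrightarrow> map w [1..<Suc M] ! k = w (Suc k)"
  by (simp del: upt_Suc)

definition Sn_state :: "complex \<Rightarrow> nat \<Rightarrow> nat \<Rightarrow> nat \<Rightarrow> (nat \<Rightarrow> complex) \<Rightarrow> (nat \<Rightarrow> complex)
    \<Rightarrow> (nat \<Rightarrow> complex) \<Rightarrow> bool list \<Rightarrow> complex" where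
  "Sn_state g n N M u v w = foldr (apply_op M)
     (map (\<lambda>i. Cop g (u i) (map w [1..<M+1])) [1..<n] @ map (\<lambda>j. Bop g (v j) (map w [1..<M+1])) [1..<N+1])
     (up_state M)"

lemma Sn_fun_upd_eq_apply_Cop:
  assumes "1 \<le> n"
  shows "Sn g n N M (u(n := x)) v w
       = apply_op M (Cop g x (map w [1..<M+1])) (Sn_state g n N M u v w) (down_conf (N - n) M)"
proof -
  let ?ws = "map w [1..<M+1]"
  have upt: "[1..<n+1] = [1..<n] @ [n]" using assms by simp
  have map_upd: "map (\<lambda>i. Cop g ((u(n := x)) i) ?ws) [1..<n] = map (\<lambda>i. Cop g (u i) ?ws) [1..<n]"
    by simp
  have "Sn g n N M (u(n := x)) v w = foldr (apply_op M)
      (map (\<lambda>i. Cop g (u i) ?ws) [1..<n] @ Cop g x ?ws # map (\<lambda>j. Bop g (v j) ?ws) [1..<N+1])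
      (up_state M) (down_conf (N - n) M)"
    unfolding Sn_def Let_def upt map_append map_upd by (simp del: upt_Suc)
  also have "\<dots> = apply_op M (Cop g x ?ws) (Sn_state g n N M u v w) (down_conf (N - n) M)"
    unfolding Sn_state_def by (subst foldr_apply_op_move) (auto intro: Cop_commute)
  finally show ?thesis .
qed

lemma Sn_pred_eq_Sn_state:
  assumes "1 \<le> n" "n \<le> N"
  shows "Sn g (n - 1) N M u v w = Sn_state g n N M u v w (down_conf (N - n + 1) M)"
  using assms unfolding Sn_def Sn_state_def Let_def by (simp add: Suc_diff_le)

lemma trig_poly_Sn:
  assumes "1 \<le> n"
  shows "trig_poly (M - 1) (\<lambda>x. Sn g n N M (u(n := x)) v w)"
proof -
  have "trig_poly (M - 1) (\<lambda>x. Cop g x (map w [1..<M+1]) xs ys)" for xs ys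
    using trig_poly_mono[of "map w [1..<M+1]" True False g xs ys]
    unfolding Cop_def by (simp del: upt_Suc)
  then show ?thesis
    unfolding Sn_fun_upd_eq_apply_Cop[OF assms(1)] apply_op_def
    by (intro trig_poly_sum) (simp add: mult.commute[of "Cop _ _ _ _ _"] trig_poly_cmult)
qed

lemma Sn_eq_0_at_shifted_w:
  assumes "1 \<le> n" "N \<le> M" "1 \<le> i" "i \<le> N - n"
  shows "Sn g n N M (u(n := w i - g)) v w = 0"
proof -
  have "Cop g (w i - g) (map w [1..<M+1]) (down_conf (N - n) M) ys = 0" for ys
    using assms by (intro Cop_down_conf_eq_0[where i = "i - 1"]) (auto simp: sh_def nth_map_upt_Suc simp del: upt_Suc)
  then show ?thesis
    using assms by (simp add: Sn_fun_upd_eq_apply_Cop apply_op_def)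
qed

lemma Sn_at_w_eq_Sn_pred:
  assumes "1 \<le> n" "n \<le> N" "N \<le> M"
  shows "Sn g n N M (u(n := w (N - n + 1))) v w
       = (\<Prod>i=1..M. sh (w (N - n + 1) - w i + g)) * Sn g (n - 1) N M u v w"
proof -
  let ?ws = "map w [1..<M+1]"
  have w: "w (N - n + 1) = ?ws ! (N - n)"
    using assms by (simp add: nth_map_upt_Suc del: upt_Suc)
  have "Cop g (?ws ! (N - n)) ?ws (down_conf (N - n) M) ys =
      (if ys = down_conf (Suc (N - n)) M then (\<Prod>x\<leftarrow>?ws. sh (?ws ! (N - n) - x + g)) else 0)" for ys
    using assms by (intro Cop_down_conf_next) auto
  then have "Sn g n N M (u(n := w (N - n + 1))) v w
      = (\<Prod>x\<leftarrow>?ws. sh (w (N - n + 1) - x + g)) * Sn_state g n N M u v w (down_conf (Suc (N - n)) M)"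
    unfolding Sn_fun_upd_eq_apply_Cop[OF assms(1)] w by (rule apply_op_delta) (use assms in \<open>simp add: down_conf_def\<close>)
  then show ?thesis
    using Sn_pred_eq_Sn_state[OF assms(1,2)] by (simp add: prod_list_map_upt_Suc del: upt_Suc)
qed

section \<open>The all-up tail of \<open>S\<^sub>0\<close>\<close>

lemma Bop_append_all_up:
  assumes "length xs = length ws1" "length ys = length ws1"
  shows "Bop g v (ws1 @ ws2) (xs @ replicate (length ws2) False) (ys @ zs) =
     Bop g v ws1 xs ys * (if zs = replicate (length ws2) False then (\<Prod>w\<leftarrow>ws2. sh (v - w)) else 0)"
  unfolding Bop_def using assms by (simp add: mono_append UNIV_bool mono_up_all_up mono_down_down_all_up)

lemma foldr_Bop_append_all_up:
  assumes "length ws1 = N" "length ws2 = K" "length xs = N"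
  shows "foldr (apply_op (N + K)) (map (\<lambda>v. Bop g v (ws1 @ ws2)) vs) (up_state (N + K)) (xs @ replicate K False)
    = (\<Prod>v\<leftarrow>vs. \<Prod>w\<leftarrow>ws2. sh (v - w)) * foldr (apply_op N) (map (\<lambda>v. Bop g v ws1) vs) (up_state N) xs"
  using assms(3)
proof (induction vs arbitrary: xs)
  case Nil
  then show ?case by (auto simp: up_state_def replicate_add)
next
  case (Cons v vs)
  let ?F = "foldr (apply_op (N + K)) (map (\<lambda>v. Bop g v (ws1 @ ws2)) vs) (up_state (N + K))"
  let ?G = "foldr (apply_op N) (map (\<lambda>v. Bop g v ws1) vs) (up_state N)"
  let ?P = "\<lambda>v. \<Prod>w\<leftarrow>ws2. sh (v - w)"
  have "foldr (apply_op (N + K)) (map (\<lambda>v. Bop g v (ws1 @ ws2)) (v # vs)) (up_state (N + K)) (xs @ replicate K False)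
     = (\<Sum>ys\<in>configs N. \<Sum>zs\<in>configs K. Bop g v (ws1 @ ws2) (xs @ replicate K False) (ys @ zs) * ?F (ys @ zs))"
    by (simp add: apply_op_def sum_configs_add)
  also have "\<dots> = (\<Sum>ys\<in>configs N. \<Sum>zs\<in>configs K.
      (if zs = replicate K False then Bop g v ws1 xs ys * ?P v * ?F (ys @ zs) else 0))"
    using Bop_append_all_up[of xs ws1 _ g v ws2] Cons.prems assms by (intro sum.cong refl) auto
  also have "\<dots> = (\<Sum>ys\<in>configs N. Bop g v ws1 xs ys * ?P v * ?F (ys @ replicate K False))"
    by (simp add: sum.delta' finite_configs)
  also have "\<dots> = (\<Sum>ys\<in>configs N. Bop g v ws1 xs ys * ?P v * ((\<Prod>v\<leftarrow>vs. ?P v) * ?G ys))"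
    using Cons.IH by (intro sum.cong refl) simp
  also have "\<dots> = (\<Prod>v\<leftarrow>v # vs. ?P v) * foldr (apply_op N) (map (\<lambda>v. Bop g v ws1) (v # vs)) (up_state N) xs"
    by (simp add: apply_op_def sum_distrib_left algebra_simps)
  finally show ?case .
qed

lemma Sn_0_eq_ZN:
  assumes "N \<le> M"
  shows "Sn g 0 N M u v w = (\<Prod>i=1..N. \<Prod>j=N+1..M. sh (v i - w j)) * ZN g N v w"
proof -
  let ?ws1 = "map w [1..<N+1]" and ?ws2 = "map w [N+1..<M+1]"
  have "[1..<M+1] = [1..<N+1] @ [N+1..<M+1]"
    using assms upt_add_eq_append[of 1 "N + 1" "M - N"] by simp
  then have ws: "map w [1..<M+1] = ?ws1 @ ?ws2" by simp
  have "Sn g 0 N M u v w = foldr (apply_op M) (map (\<lambda>x. Bop g x (?ws1 @ ?ws2)) (map v [1..<N+1]))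
       (up_state M) (replicate N True @ replicate (M - N) False)"
    unfolding Sn_def Let_def ws by (simp add: o_def down_conf_def del: upt_Suc)
  also have "\<dots> = (\<Prod>x\<leftarrow>map v [1..<N+1]. \<Prod>w\<leftarrow>?ws2. sh (x - w))
      * foldr (apply_op N) (map (\<lambda>x. Bop g x ?ws1) (map v [1..<N+1])) (up_state N) (replicate N True)"
    using foldr_Bop_append_all_up[of ?ws1 N ?ws2 "M - N" "replicate N True" g "map v [1..<N+1]"] assms
    by (simp del: upt_Suc)
  also have "foldr (apply_op N) (map (\<lambda>x. Bop g x ?ws1) (map v [1..<N+1])) (up_state N) (replicate N True)
      = ZN g N v w"
    unfolding ZN_def Sn_def Let_def by (simp add: down_conf_def o_def del: upt_Suc)
  also have "(\<Prod>x\<leftarrow>map v [1..<N+1]. \<Prod>w\<leftarrow>?ws2. sh (x - w)) = (\<Prod>i=1..N. \<Prod>j=N+1..M. sh (v i - w j))"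
    by (simp add: o_def prod_list_map_upt_Suc del: upt_Suc)
  finally show ?thesis .
qed

section \<open>The R-matrix on two adjacent sites\<close>

text \<open>\<open>R_sites g j x\<close> is \<open>R(x)\<close> acting on the sites \<open>j, j + 1\<close> (counted from 0), in the
  convention \<open>P R\<close> with \<open>P\<close> the flip of the two sites.\<close>
fun R_sites :: "complex \<Rightarrow> nat \<Rightarrow> complex \<Rightarrow> bool list \<Rightarrow> bool list \<Rightarrow> complex" where
  "R_sites g 0 x (x1 # x2 # xs) (y1 # y2 # ys) = (if xs = ys then Rent g x x2 x1 y1 y2 else 0)"
| "R_sites g (Suc j) x (a # xs) (b # ys) = (if a = b then R_sites g j x xs ys else 0)"
| "R_sites g _ _ _ _ = 0"

lemma R_sites_eq_0_if_length_neq: "length xs \<noteq> length ys \<Longrightarrow> R_sites g j x xs ys = 0"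
  by (induction g j x xs ys rule: R_sites.induct) auto

lemma R_sites_all_up_row:
  assumes "Suc j < length d" "\<not> d ! j" "\<not> d ! Suc j"
  shows "R_sites g j x d ys = (if ys = d then sh (x + g) else 0)"
  using assms
proof (induction j arbitrary: d ys)
  case 0
  then obtain d' where "d = False # False # d'" by (cases d; cases "tl d") auto
  then show ?case by (cases ys rule: remdups_adj.cases) (auto simp: Rent_def)
next
  case (Suc j)
  then obtain a d' where "d = a # d'" by (cases d) auto
  with Suc show ?case by (cases ys) auto
qed

lemma R_sites_all_up_column:
  assumes "Suc j < length d" "\<not> d ! j" "\<not> d ! Suc j"
  shows "R_sites g j x xs d = (if xs = d then sh (x + g) else 0)"
  using assms
proof (induction j arbitrary: d xs)
  case 0
  then obtain d' where "d = False # False # d'" by (cases d; cases "tl d") auto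
  then show ?case by (cases xs rule: remdups_adj.cases) (auto simp: Rent_def)
next
  case (Suc j)
  then obtain a d' where "d = a # d'" by (cases d) auto
  with Suc show ?case by (cases xs) auto
qed

text \<open>The Yang-Baxter equation, with the auxiliary space carrying the monodromy and
  \<open>R(p - q)\<close> acting on two quantum sites.\<close>
lemma RLL_relation_sites:
  "(\<Sum>y1\<in>UNIV. \<Sum>y2\<in>UNIV. Rent g (p - q) x2 x1 y1 y2 * mono g u [q, p] a b [y1, y2] [z1, z2])
   = (\<Sum>y1\<in>UNIV. \<Sum>y2\<in>UNIV. mono g u [p, q] a b [x1, x2] [y1, y2] * Rent g (p - q) y2 y1 z1 z2)"
  by (cases a; cases b; cases x1; cases x2; cases z1; cases z2)
    (simp_all add: Rent_def UNIV_bool sh_exp exp_diff exp_add field_simps)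

lemma R_sites_mono_intertwine_0:
  assumes "length rest = m"
  shows "op_mult (Suc (Suc m)) (R_sites g 0 (p - q)) (mono g u (q # p # rest) a b) xs zs
       = op_mult (Suc (Suc m)) (mono g u (p # q # rest) a b) (R_sites g 0 (p - q)) xs zs"
proof (cases "length xs = Suc (Suc m) \<and> length zs = Suc (Suc m)")
  case False
  then show ?thesis
    using assms by (auto simp: op_mult_def R_sites_eq_0_if_length_neq mono_eq_0_if_length_neq)
next
  case True
  then obtain x1 x2 xs' z1 z2 zs' where xs: "xs = x1 # x2 # xs'" "length xs' = m"
    and zs: "zs = z1 # z2 # zs'" "length zs' = m"
    by (auto simp: length_Suc_conv)
  have two_sites: "mono g u (p' # q' # rest) a b (y1 # y2 # ys) (y1' # y2' # ys')
      = (\<Sum>c\<in>UNIV. mono g u [p', q'] a c [y1, y2] [y1', y2'] * mono g u rest c b ys ys')"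
    for p' q' y1 y2 ys y1' y2' ys'
    using mono_append[of "[y1, y2]" "[p', q']" "[y1', y2']" g u rest a b ys ys'] by simp
  let ?R = "Rent g (p - q)"
  have "op_mult (Suc (Suc m)) (R_sites g 0 (p - q)) (mono g u (q # p # rest) a b) xs zs
      = (\<Sum>y1\<in>UNIV. \<Sum>y2\<in>UNIV. ?R x2 x1 y1 y2 * mono g u (q # p # rest) a b (y1 # y2 # xs') zs)"
    unfolding op_mult_def sum_configs_Suc using xs finite_configs
    by (simp add: if_distrib[of "\<lambda>z. z * _"] mult.assoc cong: if_cong)
  also have "\<dots> = (\<Sum>c\<in>UNIV. (\<Sum>y1\<in>UNIV. \<Sum>y2\<in>UNIV. ?R x2 x1 y1 y2 * mono g u [q, p] a c [y1, y2] [z1, z2])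
      * mono g u rest c b xs' zs')"
    unfolding zs two_sites by (simp add: UNIV_bool algebra_simps)
  also have "\<dots> = (\<Sum>c\<in>UNIV. (\<Sum>y1\<in>UNIV. \<Sum>y2\<in>UNIV. mono g u [p, q] a c [x1, x2] [y1, y2] * ?R y2 y1 z1 z2)
      * mono g u rest c b xs' zs')"
    by (simp only: RLL_relation_sites)
  also have "\<dots> = (\<Sum>y1\<in>UNIV. \<Sum>y2\<in>UNIV. mono g u (p # q # rest) a b xs (y1 # y2 # zs') * ?R y2 y1 z1 z2)"
    unfolding xs two_sites by (simp add: UNIV_bool algebra_simps)
  also have "\<dots> = op_mult (Suc (Suc m)) (mono g u (p # q # rest) a b) (R_sites g 0 (p - q)) xs zs"
    unfolding op_mult_def sum_configs_Suc using zs finite_configs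
    by (simp add: if_distrib[of "\<lambda>z. _ * z"] cong: if_cong)
  finally show ?thesis .
qed

lemma R_sites_mono_intertwine:
  assumes "Suc j < length ws" "length ws = M"
  shows "op_mult M (R_sites g j (ws ! j - ws ! Suc j)) (mono g u (ws[j := ws ! Suc j, Suc j := ws ! j]) a b) xs zs
       = op_mult M (mono g u ws a b) (R_sites g j (ws ! j - ws ! Suc j)) xs zs"
  using assms
proof (induction j arbitrary: ws M a xs zs)
  case 0
  then obtain p q rest where "ws = p # q # rest" by (cases ws rule: remdups_adj.cases) auto
  with 0 show ?case using R_sites_mono_intertwine_0[of rest "M - 2"] by auto
next
  case (Suc j)
  then obtain w ws' where ws: "ws = w # ws'" by (cases ws) auto
  with Suc.prems obtain m where M: "M = Suc m" "length ws' = m" "Suc j < length ws'" by auto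
  let ?R = "R_sites g j (ws' ! j - ws' ! Suc j)"
  let ?ws'' = "ws'[j := ws' ! Suc j, Suc j := ws' ! j]"
  show ?case
  proof (cases xs; cases zs)
    fix x xs' z zs' assume xs: "xs = x # xs'" and zs: "zs = z # zs'"
    have "op_mult M (R_sites g (Suc j) (ws' ! j - ws' ! Suc j)) (mono g u (w # ?ws'') a b) xs zs
       = (\<Sum>c\<in>UNIV. Rent g (u - w) a x c z * op_mult m ?R (mono g u ?ws'' c b) xs' zs')"
      unfolding op_mult_def M xs zs sum_configs_Suc
      by (cases x) (simp_all add: UNIV_bool sum_distrib_left sum.distrib[symmetric] algebra_simps)
    also have "\<dots> = (\<Sum>c\<in>UNIV. Rent g (u - w) a x c z * op_mult m (mono g u ws' c b) ?R xs' zs')"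
      using Suc.IH[OF M(3,2)] by simp
    also have "\<dots> = op_mult M (mono g u (w # ws') a b) (R_sites g (Suc j) (ws' ! j - ws' ! Suc j)) xs zs"
      unfolding op_mult_def M xs zs sum_configs_Suc
      by (cases z) (simp_all add: UNIV_bool sum_distrib_left sum_distrib_right sum.distrib[symmetric] algebra_simps)
    finally show ?thesis by (simp add: ws)
  qed (auto simp: op_mult_def ws)
qed

section \<open>Symmetry in the inhomogeneities of the up sites\<close>

lemma map_upt_comp_transpose:
  assumes "1 \<le> k" "k < M"
  shows "map (w \<circ> Transposition.transpose k (Suc k)) [1..<M+1]
       = (map w [1..<M+1])[k - 1 := w (Suc k), k := w k]"
  using assms
  by (intro nth_equalityI) (auto simp: nth_list_update Transposition.transpose_def nth_map_upt_Suc simp del: upt_Suc)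

text \<open>The R-matrix on the sites \<open>k, k + 1\<close> intertwines the monodromy matrices with
  \<open>w\<^sub>k, w\<^bsub>k+1\<^esub>\<close> exchanged, and acts as the scalar \<open>[w\<^sub>k - w\<^bsub>k+1\<^esub> + \<gamma>]\<close> both on the bra,
  where these sites are up since \<open>k > N - n\<close>, and on \<open>|\<Up>\<^sub>M\<rangle>\<close>.\<close>
lemma Sn_transpose_mult:
  assumes "N - n < k" "k < M"
  shows "sh (w k - w (Suc k) + g) * Sn g n N M u v (w \<circ> Transposition.transpose k (Suc k))
       = sh (w k - w (Suc k) + g) * Sn g n N M u v w"
proof -
  let ?ws = "map w [1..<M+1]" and ?j = "k - 1"
  let ?x = "?ws ! ?j - ?ws ! Suc ?j"
  let ?R = "R_sites g ?j ?x"
  let ?ws' = "?ws[?j := ?ws ! Suc ?j, Suc ?j := ?ws ! ?j]"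
  let ?ops = "\<lambda>ws. map (\<lambda>i. Cop g (u i) ws) [1..<n+1] @ map (\<lambda>j. Bop g (v j) ws) [1..<N+1]"
  let ?d = "down_conf (N - n) M"
  have k: "Suc ?j = k" and x: "?x = w k - w (Suc k)"
    using assms by (simp_all add: nth_map_upt_Suc del: upt_Suc)
  have swapped: "map (w \<circ> Transposition.transpose k (Suc k)) [1..<M+1] = ?ws'"
    using assms map_upt_comp_transpose[of k M w] by (simp add: k nth_map_upt_Suc del: upt_Suc)
  have "list_all2 (\<lambda>A A'. op_mult M ?R A' = op_mult M A ?R) (?ops ?ws) (?ops ?ws')"
    using assms R_sites_mono_intertwine[of ?j ?ws M g]
    unfolding Cop_def Bop_def by (intro list_all2_appendI list_all2_all_nthI) (auto simp: fun_eq_iff)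
  then have intertwine: "apply_op M ?R (foldr (apply_op M) (?ops ?ws') (up_state M))
      = foldr (apply_op M) (?ops ?ws) (apply_op M ?R (up_state M))"
    by (rule foldr_apply_op_intertwine)
  have ket: "apply_op M ?R (up_state M) = (\<lambda>xs. sh (?x + g) * up_state M xs)"
  proof
    fix xs
    have "apply_op M ?R (up_state M) xs = ?R xs (replicate M False)"
      unfolding apply_op_def up_state_def using finite_configs
      by (simp add: if_distrib[of "\<lambda>z. _ * z"] cong: if_cong)
    also have "\<dots> = sh (?x + g) * up_state M xs"
      using assms by (simp add: R_sites_all_up_column up_state_def)
    finally show "apply_op M ?R (up_state M) xs = sh (?x + g) * up_state M xs" .
  qed
  have bra: "apply_op M ?R V ?d = sh (?x + g) * V ?d" for V
    using assms by (intro apply_op_delta R_sites_all_up_row) (auto simp: down_conf_def nth_append)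
  have "sh (?x + g) * Sn g n N M u v (w \<circ> Transposition.transpose k (Suc k))
      = apply_op M ?R (foldr (apply_op M) (?ops ?ws') (up_state M)) ?d"
    unfolding bra Sn_def Let_def swapped by simp
  also have "\<dots> = sh (?x + g) * Sn g n N M u v w"
    unfolding intertwine ket foldr_apply_op_scale Sn_def Let_def by simp
  finally show ?thesis unfolding x .
qed

lemma continuous_on_Sn:
  assumes "\<And>i. continuous_on UNIV (\<lambda>t. W t i)"
  shows "continuous_on UNIV (\<lambda>t. Sn g n N M u v (W t))"
proof -
  let ?Fs = "map (\<lambda>i t. W t i) [1..<M+1]"
  let ?Xs = "map (\<lambda>i t. Cop g (u i) (map (\<lambda>F. F t) ?Fs)) [1..<n+1]
    @ map (\<lambda>j t. Bop g (v j) (map (\<lambda>F. F t) ?Fs)) [1..<N+1]"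
  have Sn_eq: "Sn g n N M u v (W t) = foldr (apply_op M) (map (\<lambda>X. X t) ?Xs) (up_state M) (down_conf (N - n) M)" for t
    unfolding Sn_def Let_def by (simp add: o_def del: upt_Suc)
  have "continuous_on UNIV (\<lambda>t. mono g c (map (\<lambda>F. F t) ?Fs) a b xs ys)" for c a b xs ys
    using continuous_on_mono[of "\<lambda>t. c" ?Fs] assms by (auto simp del: upt_Suc)
  then show ?thesis
    unfolding Sn_eq by (intro continuous_on_foldr_apply_op) (auto simp: Cop_def Bop_def simp del: upt_Suc)
qed

lemma Sn_transpose_Suc:
  assumes "N - n < k" "k < M"
  shows "Sn g n N M u v (w \<circ> Transposition.transpose k (Suc k)) = Sn g n N M u v w"
proof -
  let ?f = "\<lambda>t. Sn g n N M u v (w(k := t) \<circ> Transposition.transpose k (Suc k)) - Sn g n N M u v (w(k := t))"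
  have "continuous_on UNIV (\<lambda>t. (w(k := t)) i)" for i
    by (cases "i = k") (simp_all add: continuous_on_id)
  then have "continuous_on UNIV ?f"
    by (intro continuous_intros continuous_on_Sn) (simp add: o_def)
  moreover have "sh (t + (g - w (Suc k))) * ?f t = 0" for t
    using Sn_transpose_mult[OF assms, where w = "w(k := t)"] by (simp add: algebra_simps)
  ultimately have "?f (w k) = 0"
    by (rule sh_mult_cancel_continuous)
  then show ?thesis by simp
qed

lemma transpose_Suc_conj:
  "a < b \<Longrightarrow> Transposition.transpose a (Suc b) =
     Transposition.transpose b (Suc b) \<circ> Transposition.transpose a b \<circ> Transposition.transpose b (Suc b)"
  by (auto simp: fun_eq_iff Transposition.transpose_def)

lemma Sn_transpose_less:
  assumes "N - n < a" "a < b" "b \<le> M"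
  shows "Sn g n N M u v (w \<circ> Transposition.transpose a b) = Sn g n N M u v w"
  using assms(2,3)
proof (induction b arbitrary: w)
  case (Suc b)
  let ?\<tau> = "Transposition.transpose b (Suc b)"
  have adjacent: "Sn g n N M u v (w' \<circ> ?\<tau>) = Sn g n N M u v w'" for w'
    using assms(1) Suc.prems by (intro Sn_transpose_Suc) auto
  show ?case
  proof (cases "a = b")
    case True
    then show ?thesis using adjacent[of w] by (simp only:)
  next
    case False
    with Suc.prems have "a < b" by simp
    then have "Sn g n N M u v (w \<circ> Transposition.transpose a (Suc b))
        = Sn g n N M u v ((w \<circ> ?\<tau>) \<circ> Transposition.transpose a b \<circ> ?\<tau>)"
      by (simp add: transpose_Suc_conj o_assoc)
    also have "\<dots> = Sn g n N M u v ((w \<circ> ?\<tau>) \<circ> Transposition.transpose a b)"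
      by (rule adjacent)
    also have "\<dots> = Sn g n N M u v (w \<circ> ?\<tau>)"
      using Suc.IH[of "w \<circ> ?\<tau>"] \<open>a < b\<close> Suc.prems by (simp only: Suc_leD)
    also have "\<dots> = Sn g n N M u v w"
      by (rule adjacent)
    finally show ?thesis .
  qed
qed simp

lemma Sn_comp_permutes:
  assumes "p permutes {N - n + 1..M}"
  shows "Sn g n N M u v (w \<circ> p) = Sn g n N M u v w"
proof -
  have "\<forall>w. Sn g n N M u v (w \<circ> p) = Sn g n N M u v w"
    using assms finite_atLeastAtMost
  proof (induction p rule: permutes_induct)
    case (swap a b p)
    have "Sn g n N M u v (w \<circ> Transposition.transpose a b) = Sn g n N M u v w" for w
      using swap.hyps Sn_transpose_less[of N n a b M g u v w] Sn_transpose_less[of N n b a M g u v w]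
      by (cases a b rule: linorder_cases) (auto simp: transpose_commute)
    with swap.IH show ?case by (metis o_assoc)
  qed simp
  then show ?thesis by blast
qed

theorem lemma9:
  fixes g :: complex and N M :: nat and u v w :: "nat \<Rightarrow> complex"
  assumes NM: "1 \<le> N" "N \<le> M"
    and nz1: "\<And>i j. 1 \<le> i \<Longrightarrow> i \<le> N \<Longrightarrow> 1 \<le> j \<Longrightarrow> j \<le> M \<Longrightarrow> sh (v i - w j) \<noteq> 0"
    and nz2: "\<And>i j. 1 \<le> i \<Longrightarrow> i \<le> N \<Longrightarrow> 1 \<le> j \<Longrightarrow> j \<le> N \<Longrightarrow> j \<noteq> i \<Longrightarrow> sh (v i - v j - g) \<noteq> 0"
    and bethe: "\<And>i. 1 \<le> i \<Longrightarrow> i \<le> N \<Longrightarrow>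
       (\<Prod>j=1..M. sh (v i - w j + g) / sh (v i - w j))
       = (\<Prod>j\<in>{1..N} - {i}. sh (v i - v j + g) / sh (v i - v j - g))"
  shows "(\<forall>n\<in>{1..N}.
            (\<forall>p. p permutes {N - n + 1..M} \<longrightarrow> Sn g n N M u v (w \<circ> p) = Sn g n N M u v w)
          \<and> trig_poly (M - 1) (\<lambda>x. Sn g n N M (u(n := x)) v w)
          \<and> (\<forall>i\<in>{1..N - n}. Sn g n N M (u(n := w i - g)) v w = 0)
          \<and> Sn g n N M (u(n := w (N - n + 1))) v w
              = (\<Prod>i=1..M. sh (w (N - n + 1) - w i + g)) * Sn g (n - 1) N M u v w)
       \<and> Sn g 0 N M u v w = (\<Prod>i=1..N. \<Prod>j=N+1..M. sh (v i - w j)) * ZN g N v w"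
proof (intro conjI ballI allI impI)
  fix n assume n: "n \<in> {1..N}"
  show "Sn g n N M u v (w \<circ> p) = Sn g n N M u v w" if "p permutes {N - n + 1..M}" for p
    using that by (rule Sn_comp_permutes)
  show "trig_poly (M - 1) (\<lambda>x. Sn g n N M (u(n := x)) v w)"
    using n NM by (intro trig_poly_Sn) auto
  show "Sn g n N M (u(n := w i - g)) v w = 0" if "i \<in> {1..N - n}" for i
    using n NM that by (intro Sn_eq_0_at_shifted_w) auto
  show "Sn g n N M (u(n := w (N - n + 1))) v w
      = (\<Prod>i=1..M. sh (w (N - n + 1) - w i + g)) * Sn g (n - 1) N M u v w"
    using n NM by (intro Sn_at_w_eq_Sn_pred) auto
next
  show "Sn g 0 N M u v w = (\<Prod>i=1..N. \<Prod>j=N+1..M. sh (v i - w j)) * ZN g N v w"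
    using NM(2) by (rule Sn_0_eq_ZN)
qed

end
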